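(* Let ALG be an online algorithm for the online stochastic rewards problem and OPT a deterministic optimal fully offline policy. Suppose non-negative numbers $\lambda^\omega_t$ ($t\in T$) and $\theta^\omega_i$ ($i\in I$), defined for every sample path $\omega$, and constants $\alpha,\beta>0$ satisfy $$E_{\omega_i}\Big[\theta^\omega_i+\sum_{t:\,O^\omega_t=i}\lambda^\omega_t\,\Big|\,\omega_{-i}\Big]\ \ge\ \alpha\,E_{\omega_i}\big[\mathrm{OPT}^\omega_i\,\big|\,\omega_{-i}\big]\quad\text{for all } i\in I\text{ and all }\omega_{-i},$$ $$\beta\,\mathrm{ALG}\ \ge\ \sum_iE_\omega[\theta^\omega_i]+\sum_tE_\omega[\lambda^\omega_t].$$ Then $\mathrm{ALG}\ge\frac{\alpha}{\beta}\mathrm{OPT}$.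
   Context: Online stochastic rewards problem: bipartite graph $G=(I,T,E)$, resources $i\in I$ with rewards $r_i>0$ and unit capacity, arrivals $t\in T$ with edge probabilities $p_{it}$; each arrival is offered at most one available neighbour; an offer succeeds independently with probability $p_{it}$, earning $r_i$ and making $i$ unavailable. A fully offline policy knows the instance in advance, may adaptively choose the order in which to process arrivals, offers each arrival at most one available resource, and learns each outcome only after the offer. A sample path $\omega$ fixes an outcome $\mathbb{1}^\omega(i,t)\in\{0,1\}$ (independent Bernoulli($p_{it}$)) for every edge, and both ALG and OPT are run on the same $\omega$ (an offer of $i$ to $t$ succeeds iff $\mathbb{1}^\omega(i,t)=1$). $\omega_i$ denotes the outcomes of edges incident to $i$, $\omega_{-i}$ the outcomes of all other edges; $E_{\omega_i}[\cdot\mid\omega_{-i}]$ averages over $\omega_i$ only. $O^\omega_t$ is the resource offered to $t$ by OPT on $\omega$ ($\emptyset$ if none). $\mathrm{OPT}^\omega_i=r_i$ if OPT successfully matches $i$ on $\omega$ and $0$ otherwise. ALG and OPT also denote the respective expected total rewards. *)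

theory Defs
  imports "HOL-Probability.Probability"
begin

text \<open>Sample paths: one Bernoulli outcome per edge (edges outside E are fixed to False).\<close>
type_synonym ('i,'t) path = "'i \<times> 't \<Rightarrow> bool"

definition bern :: "('i \<Rightarrow> 't \<Rightarrow> real) \<Rightarrow> 'i \<times> 't \<Rightarrow> bool pmf" where
  "bern p = (\<lambda>(i,t). bernoulli_pmf (p i t))"

definition paths_pmf :: "('i \<times> 't) set \<Rightarrow> ('i \<Rightarrow> 't \<Rightarrow> real) \<Rightarrow> ('i,'t) path pmf" where
  "paths_pmf S p = Pi_pmf S False (bern p)"

definition incident :: "('i \<times> 't) set \<Rightarrow> 'i \<Rightarrow> ('i \<times> 't) set" where
  "incident E i = {e \<in> E. fst e = i}"

definition Exp :: "('i \<times> 't) set \<Rightarrow> ('i \<Rightarrow> 't \<Rightarrow> real) \<Rightarrow> (('i,'t) path \<Rightarrow> real) \<Rightarrow> real" where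
  "Exp E p f = measure_pmf.expectation (paths_pmf E p) f"

text \<open>E_{omega_i}[f | omega_{-i}]: average over the outcomes of the edges incident to i,
  the outcomes of all other edges being taken from omega.\<close>
definition cond_Exp :: "('i \<times> 't) set \<Rightarrow> ('i \<Rightarrow> 't \<Rightarrow> real) \<Rightarrow> 'i \<Rightarrow> (('i,'t) path \<Rightarrow> real)
    \<Rightarrow> ('i,'t) path \<Rightarrow> real" where
  "cond_Exp E p i f \<omega> = measure_pmf.expectation (paths_pmf (incident E i) p)
      (\<lambda>\<omega>'. f (\<lambda>e. if e \<in> incident E i then \<omega>' e else \<omega> e))"

text \<open>A history lists the processed arrivals
  in order, with the offered resource (None = no offer) and the outcome of the offer.
  Given the history, the policy either stops (None) or picks the next arrival and the offer.\<close>
type_synonym ('i,'t) history = "('t \<times> ('i option \<times> bool)) list"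
type_synonym ('i,'t) policy = "('i,'t) history \<Rightarrow> ('t \<times> 'i option) option"

definition available :: "('i,'t) history \<Rightarrow> 'i \<Rightarrow> bool" where
  "available h i \<longleftrightarrow> \<not> (\<exists>(t, oi, b) \<in> set h. oi = Some i \<and> b)"

definition valid_action :: "'t set \<Rightarrow> ('i \<times> 't) set \<Rightarrow> ('i,'t) history \<Rightarrow> 't \<Rightarrow> 'i option \<Rightarrow> bool" where
  "valid_action T E h t oi \<longleftrightarrow> t \<in> T \<and> t \<notin> fst ` set h \<and>
     (case oi of None \<Rightarrow> True | Some i \<Rightarrow> (i, t) \<in> E \<and> available h i)"

fun outcome :: "('i,'t) path \<Rightarrow> 't \<Rightarrow> 'i option \<Rightarrow> bool" where
  "outcome \<omega> t None = False"
| "outcome \<omega> t (Some i) = \<omega> (i, t)"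

fun run :: "'t set \<Rightarrow> ('i \<times> 't) set \<Rightarrow> ('i,'t) policy \<Rightarrow> ('i,'t) path \<Rightarrow> nat
    \<Rightarrow> ('i,'t) history \<Rightarrow> ('i,'t) history" where
  "run T E \<pi> \<omega> 0 h = h"
| "run T E \<pi> \<omega> (Suc n) h = (case \<pi> h of
      None \<Rightarrow> h
    | Some (t, oi) \<Rightarrow> if valid_action T E h t oi
                      then run T E \<pi> \<omega> n (h @ [(t, (oi, outcome \<omega> t oi))]) else h)"

definition final_history :: "'t set \<Rightarrow> ('i \<times> 't) set \<Rightarrow> ('i,'t) policy \<Rightarrow> ('i,'t) path \<Rightarrow> ('i,'t) history" where
  "final_history T E \<pi> \<omega> = run T E \<pi> \<omega> (card T) []"

definition offered :: "'t set \<Rightarrow> ('i \<times> 't) set \<Rightarrow> ('i,'t) policy \<Rightarrow> ('i,'t) path \<Rightarrow> 't \<Rightarrow> 'i option" where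
  "offered T E \<pi> \<omega> t = (case map_of (final_history T E \<pi> \<omega>) t of None \<Rightarrow> None | Some (oi, b) \<Rightarrow> oi)"

definition reward_i :: "'t set \<Rightarrow> ('i \<times> 't) set \<Rightarrow> ('i \<Rightarrow> real) \<Rightarrow> ('i,'t) policy \<Rightarrow> ('i,'t) path \<Rightarrow> 'i \<Rightarrow> real" where
  "reward_i T E r \<pi> \<omega> i = (if \<exists>t \<in> T. offered T E \<pi> \<omega> t = Some i \<and> \<omega> (i, t) then r i else 0)"

definition policy_value :: "'i set \<Rightarrow> 't set \<Rightarrow> ('i \<times> 't) set \<Rightarrow> ('i \<Rightarrow> real) \<Rightarrow> ('i \<Rightarrow> 't \<Rightarrow> real)
    \<Rightarrow> ('i,'t) policy \<Rightarrow> real" where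
  "policy_value I T E r p \<pi> = Exp E p (\<lambda>\<omega>. \<Sum>i\<in>I. reward_i T E r \<pi> \<omega> i)"

end

theory Submission
  imports Defs
begin

text \<open>Proof idea: by the tower property, averaging the first hypothesis over \<open>\<omega>\<^sub>-\<^sub>i\<close> gives
  \<open>E[\<theta>\<^sub>i] + E[\<Sum>t. O\<^sub>t = i. \<lambda>\<^sub>t] \<ge> \<alpha> E[OPT\<^sub>i]\<close> for every resource \<open>i\<close>. Summing over \<open>i\<close>, each
  arrival is offered at most one resource, so its dual variable \<open>\<lambda>\<^sub>t\<close> is counted at most once and
  the left-hand side is at most \<open>\<Sum>\<^sub>i E[\<theta>\<^sub>i] + \<Sum>\<^sub>t E[\<lambda>\<^sub>t] \<le> \<beta> ALG\<close>, while the right-hand side is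
  \<open>\<alpha> OPT\<close>.\<close>

lemma finite_set_paths_pmf: "finite S \<Longrightarrow> finite (set_pmf (paths_pmf S p))"
  unfolding paths_pmf_def
  by (rule finite_subset[OF set_Pi_pmf_subset']) (auto intro!: finite_PiE_dflt)

lemma integrable_paths_pmf:
  "finite S \<Longrightarrow> integrable (measure_pmf (paths_pmf S p)) (f :: ('i,'t) path \<Rightarrow> real)"
  by (intro integrable_measure_pmf_finite finite_set_paths_pmf)

lemma expectation_pair_pmf_finite:
  fixes f :: "'a \<times> 'b \<Rightarrow> real"
  assumes "finite (set_pmf A)" "finite (set_pmf B)"
  shows "measure_pmf.expectation (pair_pmf A B) f =
         measure_pmf.expectation A (\<lambda>a. measure_pmf.expectation B (\<lambda>b. f (a, b)))"
proof -
  have "measure_pmf.expectation (pair_pmf A B) f =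
        (\<Sum>x\<in>set_pmf A \<times> set_pmf B. pmf (pair_pmf A B) x *\<^sub>R f x)"
    using assms by (intro integral_measure_pmf) auto
  also have "\<dots> = (\<Sum>a\<in>set_pmf A. \<Sum>b\<in>set_pmf B. pmf A a * (pmf B b * f (a, b)))"
    by (simp add: sum.cartesian_product case_prod_unfold mult.assoc, intro sum.cong)
       (auto simp: pmf_pair)
  also have "\<dots> = (\<Sum>a\<in>set_pmf A. pmf A a *\<^sub>R measure_pmf.expectation B (\<lambda>b. f (a, b)))"
    using assms by (simp add: integral_measure_pmf[of "set_pmf B"] sum_distrib_left)
  also have "\<dots> = measure_pmf.expectation A (\<lambda>a. measure_pmf.expectation B (\<lambda>b. f (a, b)))"
    using assms by (intro integral_measure_pmf[symmetric]) auto
  finally show ?thesis .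
qed

lemma Exp_eq_expectation_cond_Exp:
  assumes "finite E"
  shows "Exp E p f = measure_pmf.expectation (paths_pmf (E - incident E i) p) (cond_Exp E p i f)"
proof -
  define A where "A = incident E i"
  define B where "B = E - A"
  have AB: "E = A \<union> B" "A \<inter> B = {}" "finite A" "finite B"
    using assms by (auto simp: A_def B_def incident_def)
  let ?glue = "\<lambda>(g, f) x. if x \<in> A then f x else g x"
  have "paths_pmf E p = map_pmf (\<lambda>(f, g) x. if x \<in> A then f x else g x)
                          (pair_pmf (paths_pmf A p) (paths_pmf B p))"
    unfolding paths_pmf_def using AB by (simp add: Pi_pmf_union)
  also have "\<dots> = map_pmf ?glue (pair_pmf (paths_pmf B p) (paths_pmf A p))"
    by (subst pair_commute_pmf) (simp add: pmf.map_comp o_def case_prod_unfold)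
  finally have "Exp E p f =
      measure_pmf.expectation (pair_pmf (paths_pmf B p) (paths_pmf A p)) (\<lambda>x. f (?glue x))"
    unfolding Exp_def by simp
  also have "\<dots> = measure_pmf.expectation (paths_pmf B p) (cond_Exp E p i f)"
    using AB(3,4)
    by (subst expectation_pair_pmf_finite)
       (simp_all only: finite_set_paths_pmf cond_Exp_def[abs_def] A_def case_prod_conv)
  finally show ?thesis by (simp add: B_def A_def)
qed

lemma Exp_bound_of_cond_Exp_bound:
  assumes "finite E"
    and "\<And>\<omega>. \<omega> \<in> set_pmf (paths_pmf (E - incident E i) p) \<Longrightarrow>
               c * cond_Exp E p i f \<omega> \<le> cond_Exp E p i g \<omega>"
  shows "c * Exp E p f \<le> Exp E p g"
proof -
  let ?R = "paths_pmf (E - incident E i) p"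
  have "c * Exp E p f = measure_pmf.expectation ?R (\<lambda>\<omega>. c * cond_Exp E p i f \<omega>)"
    using assms(1) by (simp add: Exp_eq_expectation_cond_Exp[of E p f i])
  also have "\<dots> \<le> measure_pmf.expectation ?R (cond_Exp E p i g)"
    using assms by (intro integral_mono_AE integrable_paths_pmf AE_pmfI) auto
  also have "\<dots> = Exp E p g"
    using assms(1) by (simp add: Exp_eq_expectation_cond_Exp[of E p g i])
  finally show ?thesis .
qed

lemma Exp_sum: "finite E \<Longrightarrow> Exp E p (\<lambda>\<omega>. \<Sum>i\<in>I. f \<omega> i) = (\<Sum>i\<in>I. Exp E p (\<lambda>\<omega>. f \<omega> i))"
  unfolding Exp_def by (intro Bochner_Integration.integral_sum integrable_paths_pmf)

lemma Exp_add: "finite E \<Longrightarrow> Exp E p (\<lambda>\<omega>. f \<omega> + g \<omega>) = Exp E p f + Exp E p g"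
  unfolding Exp_def by (intro Bochner_Integration.integral_add integrable_paths_pmf)

lemma Exp_mono: "finite E \<Longrightarrow> (\<And>\<omega>. f \<omega> \<le> g \<omega>) \<Longrightarrow> Exp E p f \<le> Exp E p g"
  unfolding Exp_def by (intro integral_mono integrable_paths_pmf)

lemma sum_over_fibres_le:
  fixes g :: "'t \<Rightarrow> 'i option" and f :: "'t \<Rightarrow> real"
  assumes "finite I" "finite T" "\<And>t. 0 \<le> f t"
  shows "(\<Sum>i\<in>I. \<Sum>t\<in>{t\<in>T. g t = Some i}. f t) \<le> (\<Sum>t\<in>T. f t)"
proof -
  have "(\<Sum>i\<in>I. \<Sum>t\<in>{t\<in>T. g t = Some i}. f t) =
        (\<Sum>t\<in>T. \<Sum>i\<in>I. if g t = Some i then f t else 0)"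
    using assms(2) by (simp add: sum.If_cases Int_def sum.swap[of _ I])
  also have "\<dots> \<le> (\<Sum>t\<in>T. f t)"
  proof (rule sum_mono)
    fix t
    show "(\<Sum>i\<in>I. if g t = Some i then f t else 0) \<le> f t"
      using assms by (cases "g t") (auto simp: sum.delta)
  qed
  finally show ?thesis .
qed

theorem lemma5:
  fixes I :: "'i set" and T :: "'t set" and E :: "('i \<times> 't) set"
    and r :: "'i \<Rightarrow> real" and p :: "'i \<Rightarrow> 't \<Rightarrow> real"
    and OPT :: "('i,'t) policy" and ALG :: real
    and lam :: "('i,'t) path \<Rightarrow> 't \<Rightarrow> real" and theta :: "('i,'t) path \<Rightarrow> 'i \<Rightarrow> real"
    and \<alpha> \<beta> :: real
  assumes "finite I" "finite T" "E \<subseteq> I \<times> T"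
    and "\<And>i. i \<in> I \<Longrightarrow> r i > 0"
    and "\<And>i t. (i, t) \<in> E \<Longrightarrow> 0 \<le> p i t \<and> p i t \<le> 1"
    and OPT_optimal: "\<And>\<pi>. policy_value I T E r p \<pi> \<le> policy_value I T E r p OPT"
    and "\<And>\<omega> t. 0 \<le> lam \<omega> t" and "\<And>\<omega> i. 0 \<le> theta \<omega> i"
    and "\<alpha> > 0" and "\<beta> > 0"
    and cond1: "\<And>i \<omega>. i \<in> I \<Longrightarrow> \<omega> \<in> set_pmf (paths_pmf (E - incident E i) p) \<Longrightarrow>
        cond_Exp E p i (\<lambda>\<omega>. theta \<omega> i + (\<Sum>t\<in>{t\<in>T. offered T E OPT \<omega> t = Some i}. lam \<omega> t)) \<omega>
        \<ge> \<alpha> * cond_Exp E p i (\<lambda>\<omega>. reward_i T E r OPT \<omega> i) \<omega>"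
    and cond2: "\<beta> * ALG \<ge> (\<Sum>i\<in>I. Exp E p (\<lambda>\<omega>. theta \<omega> i)) + (\<Sum>t\<in>T. Exp E p (\<lambda>\<omega>. lam \<omega> t))"
  shows "ALG \<ge> \<alpha> / \<beta> * policy_value I T E r p OPT"
proof -
  have finE: "finite E"
    using assms(1-3) by (meson finite_SigmaI finite_subset)
  define S where "S \<omega> i = (\<Sum>t\<in>{t\<in>T. offered T E OPT \<omega> t = Some i}. lam \<omega> t)" for \<omega> i
  have "\<alpha> * policy_value I T E r p OPT = (\<Sum>i\<in>I. \<alpha> * Exp E p (\<lambda>\<omega>. reward_i T E r OPT \<omega> i))"
    unfolding policy_value_def by (simp add: Exp_sum finE sum_distrib_left)
  also have "\<dots> \<le> (\<Sum>i\<in>I. Exp E p (\<lambda>\<omega>. theta \<omega> i + S \<omega> i))"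
    using cond1 unfolding S_def by (intro sum_mono Exp_bound_of_cond_Exp_bound finE) auto
  also have "\<dots> = (\<Sum>i\<in>I. Exp E p (\<lambda>\<omega>. theta \<omega> i)) + Exp E p (\<lambda>\<omega>. \<Sum>i\<in>I. S \<omega> i)"
    by (simp add: Exp_add Exp_sum finE sum.distrib)
  also have "Exp E p (\<lambda>\<omega>. \<Sum>i\<in>I. S \<omega> i) \<le> (\<Sum>t\<in>T. Exp E p (\<lambda>\<omega>. lam \<omega> t))"
    unfolding S_def using assms(1,2,7)
    by (simp add: Exp_sum[symmetric] finE Exp_mono sum_over_fibres_le)
  finally have "\<alpha> * policy_value I T E r p OPT \<le> \<beta> * ALG"
    using cond2 by linarith
  then show ?thesis
    using \<open>\<beta> > 0\<close> by (simp add: field_simps)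
qed

end
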